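(* Let $G$ be a countable group, and let $X$ be a proper metric space equipped with a $G$-action by isometries. Assume that there exist a compact metrizable $G$-space $K$ that does not carry any $G$-invariant probability measure, and a $G$-invariant Borel subset $K^*\subseteq K$ which contains a Borel subset homeomorphic to a Cantor set. Assume in addition that for every sequence $(g_n)_{n\in\mathbb N}$ in $G$ that escapes every compact subspace of $X$, there exist a subsequence $(g_{\sigma(n)})_{n\in\mathbb N}$ and points $\xi^-,\xi^+\in K$ such that for all $\xi\in K^*\setminus\{\xi^-\}$, the sequence $(g_{\sigma(n)}\xi)_{n\in\mathbb N}$ converges to $\xi^+$. Then the $G$-action on $X$ is properly proximal.
   Context: A sequence $(g_n)$ in $G$ escapes every compact subspace of $X$ if for some (equivalently any) $x\in X$, $(g_nx)$ eventually leaves every compact subset. The $G$-action on $X$ is properly proximal if there exist finitely many compact metrizable $G$-spaces $K_1,\dots,K_\ell$, none carrying a $G$-invariant probability measure, and diffuse probability measures $\eta_i$ on $K_i$, such that for every sequence $(g_n)$ escaping every compact subspace of $X$, there exist $i$ and a subsequence $(g_{\sigma(n)})$ with $g_{\sigma(n)}h\eta_i-g_{\sigma(n)}\eta_i\to0$ weak-$*$ for every $h\in G$. *)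

theory Defs
  imports "HOL-Analysis.Analysis" "HOL-Probability.Probability" "HOL-Algebra.Group_Action"
begin

definition proper_metric_space :: "'x::metric_space itself \<Rightarrow> bool" where
  "proper_metric_space _ \<longleftrightarrow> (\<forall>(x::'x) r. compact (cball x r))"

definition isometric_action :: "('g, 'b) monoid_scheme \<Rightarrow> ('g \<Rightarrow> 'x::metric_space \<Rightarrow> 'x) \<Rightarrow> bool" where
  "isometric_action G act \<longleftrightarrow> group_action G UNIV act \<and>
     (\<forall>g\<in>carrier G. \<forall>x y. dist (act g x) (act g y) = dist x y)"

text \<open>A compact metrizable G-space: a compact subset K of a metric space with a continuous
  G-action (G is countable and discrete, so continuity means each act g is continuous).\<close>
definition compact_G_space :: "('g, 'b) monoid_scheme \<Rightarrow> 'k::metric_space set \<Rightarrow> ('g \<Rightarrow> 'k \<Rightarrow> 'k) \<Rightarrow> bool" where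
  "compact_G_space G K act \<longleftrightarrow> compact K \<and> group_action G K act \<and>
     (\<forall>g\<in>carrier G. continuous_on K (act g))"

definition borel_prob_on :: "'k::topological_space set \<Rightarrow> 'k measure \<Rightarrow> bool" where
  "borel_prob_on K \<mu> \<longleftrightarrow> prob_space \<mu> \<and> space \<mu> = K \<and> sets \<mu> = sets (restrict_space borel K)"

definition push :: "('g \<Rightarrow> 'k \<Rightarrow> 'k) \<Rightarrow> 'g \<Rightarrow> 'k measure \<Rightarrow> 'k measure" where
  "push act g \<mu> = distr \<mu> \<mu> (act g)"

definition has_invariant_prob :: "('g, 'b) monoid_scheme \<Rightarrow> 'k::topological_space set \<Rightarrow> ('g \<Rightarrow> 'k \<Rightarrow> 'k) \<Rightarrow> bool" where
  "has_invariant_prob G K act \<longleftrightarrow>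
     (\<exists>\<mu>. borel_prob_on K \<mu> \<and> (\<forall>g\<in>carrier G. push act g \<mu> = \<mu>))"

definition diffuse :: "'k measure \<Rightarrow> bool" where
  "diffuse \<mu> \<longleftrightarrow> (\<forall>x\<in>space \<mu>. emeasure \<mu> {x} = 0)"

definition weak_star_diff_to_zero :: "'k::topological_space set \<Rightarrow> (nat \<Rightarrow> 'k measure) \<Rightarrow> (nat \<Rightarrow> 'k measure) \<Rightarrow> bool" where
  "weak_star_diff_to_zero K \<mu> \<nu> \<longleftrightarrow>
     (\<forall>f :: 'k \<Rightarrow> real. continuous_on K f \<longrightarrow>
        (\<lambda>n. (\<integral>x. f x \<partial>(\<mu> n)) - (\<integral>x. f x \<partial>(\<nu> n))) \<longlonglongrightarrow> 0)"

definition escapes :: "('g \<Rightarrow> 'x::topological_space \<Rightarrow> 'x) \<Rightarrow> (nat \<Rightarrow> 'g) \<Rightarrow> bool" where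
  "escapes act gs \<longleftrightarrow> (\<exists>x. \<forall>C. compact C \<longrightarrow> eventually (\<lambda>n. act (gs n) x \<notin> C) sequentially)"

text \<open>Compact metrizable spaces are represented (up to homeomorphism)
  as compact subsets of the Hilbert-cube-type space nat => real with the product topology,
  into which every compact metrizable space embeds.\<close>
definition properly_proximal :: "('g, 'b) monoid_scheme \<Rightarrow> ('g \<Rightarrow> 'x::topological_space \<Rightarrow> 'x) \<Rightarrow> bool" where
  "properly_proximal G act \<longleftrightarrow>
    (\<exists>(l::nat) (Ks :: nat \<Rightarrow> (nat \<Rightarrow> real) set) (acts :: nat \<Rightarrow> 'g \<Rightarrow> (nat \<Rightarrow> real) \<Rightarrow> (nat \<Rightarrow> real))
        (etas :: nat \<Rightarrow> (nat \<Rightarrow> real) measure).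
       (\<forall>i<l. compact_G_space G (Ks i) (acts i) \<and> \<not> has_invariant_prob G (Ks i) (acts i)
              \<and> borel_prob_on (Ks i) (etas i) \<and> diffuse (etas i)) \<and>
       (\<forall>gs. (\<forall>n. gs n \<in> carrier G) \<longrightarrow> escapes act gs \<longrightarrow>
          (\<exists>i<l. \<exists>\<sigma>. strict_mono \<sigma> \<and>
             (\<forall>h\<in>carrier G. weak_star_diff_to_zero (Ks i)
                (\<lambda>n. push (acts i) (gs (\<sigma> n)) (push (acts i) h (etas i)))
                (\<lambda>n. push (acts i) (gs (\<sigma> n)) (etas i))))))"

definition cantor_set :: "real set" where
  "cantor_set = range (\<lambda>d::nat \<Rightarrow> bool. \<Sum>n. (if d n then 2 else 0) / 3 ^ Suc n)"

end

theory Submission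
  imports Defs
begin

text \<open>Push Lebesgue measure on [0,1) forward along an injective Borel map \<open>\<psi>\<close> into the
  Cantor subset of \<open>K\<^sup>*\<close>; the image \<open>\<eta>\<close> is a diffuse probability measure. For \<open>h \<in> G\<close>,
  \<open>h\<eta>\<close> is the image under the injective map \<open>h \<circ> \<psi>\<close> into \<open>K\<^sup>*\<close>, so almost every
  point avoids the exceptional point \<open>\<xi>\<^sup>-\<close>. Along the given subsequence, dominated convergence then
  makes both \<open>g\<^sub>n h\<eta>\<close> and \<open>g\<^sub>n \<eta>\<close> converge weak-* to the Dirac mass at \<open>\<xi>\<^sup>+\<close>, so their
  difference tends to 0. One compact \<open>G\<close>-space suffices, once \<open>K\<close> is embedded into
  \<open>nat \<Rightarrow> real\<close> through the distances to a countable dense subset.\<close>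

section \<open>Embedding compact metric spaces into \<open>nat \<Rightarrow> real\<close>\<close>

lemma compact_countable_dense:
  fixes K :: "'a::metric_space set"
  assumes "compact K"
  obtains D where "countable D" "D \<subseteq> K" "\<And>x e. x \<in> K \<Longrightarrow> e > 0 \<Longrightarrow> \<exists>d\<in>D. dist x d < e"
proof -
  have "\<exists>F. finite F \<and> F \<subseteq> K \<and> K \<subseteq> (\<Union>x\<in>F. ball x (1 / Suc n))" for n
  proof -
    have "K \<subseteq> (\<Union>x\<in>K. ball x (1 / Suc n))"
      by (auto intro!: bexI)
    then obtain F where "F \<subseteq> K" "finite F" "K \<subseteq> (\<Union>x\<in>F. ball x (1 / Suc n))"
      using compactE_image[OF assms, of K "\<lambda>x. ball x (1 / Suc n)"] by blast
    then show ?thesis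
      by blast
  qed
  then obtain F where F: "\<And>n. finite (F n)" "\<And>n. F n \<subseteq> K" "\<And>n. K \<subseteq> (\<Union>x\<in>F n. ball x (1 / Suc n))"
    by metis
  show ?thesis
  proof
    show "countable (\<Union>n. F n)" "(\<Union>n. F n) \<subseteq> K"
      using F by (auto simp: countable_finite)
    fix x e assume "x \<in> K" "(e::real) > 0"
    moreover obtain n where "1 / Suc n < e"
      using \<open>e > 0\<close> nat_approx_posE by blast
    ultimately show "\<exists>d\<in>\<Union>n. F n. dist x d < e"
      using F(3)[of n] by (force simp: dist_commute)
  qed
qed

lemma compact_homeomorphic_image_in_sequences:
  fixes K :: "'a::metric_space set"
  assumes "compact K"
  obtains e :: "'a \<Rightarrow> nat \<Rightarrow> real" and e' where "homeomorphism K (e ` K) e e'"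
proof -
  obtain D where D: "countable D" "D \<subseteq> K" "\<And>x e. x \<in> K \<Longrightarrow> e > 0 \<Longrightarrow> \<exists>d\<in>D. dist x d < e"
    using compact_countable_dense[OF assms] by blast
  define e where "e x = (\<lambda>i. dist x (from_nat_into D i))" for x
  have "continuous_on K e"
    unfolding e_def by (intro continuous_on_coordinatewise_then_product continuous_intros)
  moreover have "inj_on e K"
  proof
    fix x y assume "x \<in> K" "y \<in> K" "e x = e y"
    have "dist x y < \<epsilon>" if "\<epsilon> > 0" for \<epsilon>
    proof -
      obtain d where "d \<in> D" "dist x d < \<epsilon> / 2"
        using D(3) \<open>x \<in> K\<close> \<open>\<epsilon> > 0\<close> half_gt_zero by blast
      moreover have "dist y d = dist x d"
        using fun_cong[OF \<open>e x = e y\<close>, of "to_nat_on D d"] \<open>d \<in> D\<close> D(1)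
        by (simp add: e_def)
      ultimately show ?thesis
        using dist_triangle3[of x y d] by (simp add: dist_commute)
    qed
    then show "x = y"
      by (metis dist_pos_lt less_irrefl)
  qed
  ultimately show ?thesis
    using homeomorphism_compact[OF assms] that by blast
qed

section \<open>Transporting compact \<open>G\<close>-spaces along homeomorphisms\<close>

lemma measurable_restrict_space_continuous_on:
  assumes "continuous_on A f" "f ` A \<subseteq> B"
  shows "f \<in> measurable (restrict_space borel A) (restrict_space borel B)"
  using assms borel_measurable_continuous_on_restrict
  by (intro measurable_restrict_space2) (auto simp: space_restrict_space)

lemma compact_G_space_measurable:
  assumes "compact_G_space G K act" "g \<in> carrier G"
  shows "act g \<in> measurable (restrict_space borel K) (restrict_space borel K)"
proof -
  interpret group_action G K act
    using assms(1) by (simp add: compact_G_space_def)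
  show ?thesis
    using assms surj_prop[OF assms(2)]
    by (intro measurable_restrict_space_continuous_on) (auto simp: compact_G_space_def)
qed

text \<open>Restricted to \<open>K'\<close> so that each \<open>conjugate_action e e' K' act g\<close> is extensional,
  as elements of \<open>BijGroup K'\<close> must be.\<close>
definition conjugate_action :: "('a \<Rightarrow> 'b) \<Rightarrow> ('b \<Rightarrow> 'a) \<Rightarrow> 'b set \<Rightarrow> ('g \<Rightarrow> 'a \<Rightarrow> 'a) \<Rightarrow> 'g \<Rightarrow> 'b \<Rightarrow> 'b"
  where "conjugate_action e e' K' act g = (\<lambda>y\<in>K'. e (act g (e' y)))"

lemma conjugate_action_apply:
  assumes "homeomorphism K K' e e'" "x \<in> K"
  shows "conjugate_action e e' K' act g (e x) = e (act g x)"
  using assms unfolding homeomorphism_def conjugate_action_def by auto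

lemma group_action_conjugate:
  assumes act: "group_action G K act"
    and inverse: "\<forall>x\<in>K. e' (e x) = x" "\<forall>y\<in>K'. e (e' y) = y" and maps: "e ` K \<subseteq> K'" "e' ` K' \<subseteq> K"
  shows "group_action G K' (conjugate_action e e' K' act)"
proof -
  interpret group_action G K act by (fact act)
  let ?a = "conjugate_action e e' K' act"
  have bij_e: "bij_betw e K K'" and bij_e': "bij_betw e' K' K"
    using inverse maps by (auto intro!: bij_betw_byWitness)
  have Bij: "?a g \<in> Bij K'" if "g \<in> carrier G" for g
  proof -
    have "bij_betw (e \<circ> act g \<circ> e') K' K'"
      using bij_e' bij_e bij_prop0[OF that] by (auto simp: Bij_def intro: bij_betw_trans)
    then have "bij_betw (?a g) K' K'"
      using bij_betw_cong[of K' "?a g" "e \<circ> act g \<circ> e'" K'] by (simp add: conjugate_action_def)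
    then show ?thesis
      by (simp add: Bij_def conjugate_action_def)
  qed
  have "?a (g1 \<otimes>\<^bsub>G\<^esub> g2) = compose K' (?a g1) (?a g2)"
    if "g1 \<in> carrier G" "g2 \<in> carrier G" for g1 g2
  proof
    fix y
    show "?a (g1 \<otimes>\<^bsub>G\<^esub> g2) y = compose K' (?a g1) (?a g2) y"
    proof (cases "y \<in> K'")
      case True
      then have "e' y \<in> K"
        using maps by auto
      then have "e (act g2 (e' y)) \<in> K'" "act g2 (e' y) \<in> K"
        using element_image that(2) maps by blast+
      with True \<open>e' y \<in> K\<close> show ?thesis
        using that inverse by (simp add: compose_def conjugate_action_def composition_rule)
    qed (simp add: compose_def conjugate_action_def)
  qed
  then show ?thesis
    using group_hom group_BijGroup Bij
    by (auto simp: group_action_def group_hom_def group_hom_axioms_def hom_def BijGroup_def)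
qed

lemma compact_G_space_conjugate:
  assumes "compact_G_space G K act" "homeomorphism K K' e e'"
  shows "compact_G_space G K' (conjugate_action e e' K' act)"
proof -
  interpret group_action G K act
    using assms(1) by (simp add: compact_G_space_def)
  have "continuous_on K' (conjugate_action e e' K' act g)" if "g \<in> carrier G" for g
  proof -
    have "continuous_on K' (e \<circ> act g \<circ> e')"
      using assms that surj_prop
      by (intro continuous_on_compose) (auto simp: compact_G_space_def homeomorphism_def elim: continuous_on_subset)
    then show ?thesis
      by (rule continuous_on_cong[THEN iffD1, rotated 2]) (auto simp: conjugate_action_def)
  qed
  moreover have "group_action G K' (conjugate_action e e' K' act)"
    using assms by (intro group_action_conjugate) (auto simp: compact_G_space_def homeomorphism_def)
  moreover have "compact K'"
    using assms compact_continuous_image by (fastforce simp: compact_G_space_def homeomorphism_def)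
  ultimately show ?thesis
    by (simp add: compact_G_space_def)
qed

lemma has_invariant_prob_equivariant_image:
  assumes "compact_G_space G K act" "compact_G_space G K' act'"
    and "continuous_on K' f" "f ` K' \<subseteq> K"
    and equivariant: "\<forall>g\<in>carrier G. \<forall>y\<in>K'. f (act' g y) = act g (f y)"
    and "has_invariant_prob G K' act'"
  shows "has_invariant_prob G K act"
proof -
  obtain \<nu> where \<nu>: "borel_prob_on K' \<nu>" and invariant: "\<forall>g\<in>carrier G. push act' g \<nu> = \<nu>"
    using assms(6) by (auto simp: has_invariant_prob_def)
  then interpret prob_space \<nu> by (simp add: borel_prob_on_def)
  have sets_\<nu>: "sets \<nu> = sets (restrict_space borel K')" "space \<nu> = K'"
    using \<nu> by (auto simp: borel_prob_on_def)
  have f: "f \<in> measurable \<nu> (restrict_space borel K)"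
    using measurable_restrict_space_continuous_on[OF assms(3,4)] by (simp add: measurable_cong_sets[OF sets_\<nu>(1)])
  define \<mu> where "\<mu> = distr \<nu> (restrict_space borel K) f"
  have "push act g \<mu> = \<mu>" if g: "g \<in> carrier G" for g
  proof -
    have act: "act g \<in> measurable (restrict_space borel K) \<mu>"
      using compact_G_space_measurable[OF assms(1) g] by (simp add: \<mu>_def)
    have act': "act' g \<in> measurable \<nu> \<nu>"
      using compact_G_space_measurable[OF assms(2) g] measurable_cong_sets[OF sets_\<nu>(1) sets_\<nu>(1)] by blast
    have "push act g \<mu> = distr \<nu> \<mu> (act g \<circ> f)"
      unfolding push_def \<mu>_def by (rule distr_distr[OF act[unfolded \<mu>_def] f])
    also have "\<dots> = distr \<nu> (restrict_space borel K) (f \<circ> act' g)"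
      using equivariant g sets_\<nu> by (intro distr_cong) (auto simp: \<mu>_def)
    also have "\<dots> = distr (push act' g \<nu>) (restrict_space borel K) f"
      unfolding push_def by (rule distr_distr[symmetric, OF f act'])
    finally show ?thesis
      using invariant g by (simp add: \<mu>_def)
  qed
  moreover have "borel_prob_on K \<mu>"
    using prob_space_distr[OF f] by (simp add: borel_prob_on_def \<mu>_def space_restrict_space)
  ultimately show ?thesis
    unfolding has_invariant_prob_def by blast
qed

lemma not_has_invariant_prob_conjugate:
  fixes K :: "'a::metric_space set" and K' :: "'b::metric_space set"
  assumes "compact_G_space G K act" "homeomorphism K K' e e'" "\<not> has_invariant_prob G K act"
  shows "\<not> has_invariant_prob G K' (conjugate_action e e' K' act)"
proof
  interpret group_action G K act
    using assms(1) by (simp add: compact_G_space_def)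
  assume "has_invariant_prob G K' (conjugate_action e e' K' act)"
  moreover have "\<forall>g\<in>carrier G. \<forall>y\<in>K'. e' (conjugate_action e e' K' act g y) = act g (e' y)"
    using assms(2) element_image by (auto simp: conjugate_action_def homeomorphism_def)
  moreover have "continuous_on K' e'" "e' ` K' \<subseteq> K"
    using assms(2) by (auto simp: homeomorphism_def)
  ultimately have "has_invariant_prob G K act"
    using has_invariant_prob_equivariant_image[OF assms(1) compact_G_space_conjugate[OF assms(1,2)]] by blast
  with assms(3) show False ..
qed

section \<open>A Borel injection of [0,1) into the Cantor set\<close>

definition cantor_of_digits :: "(nat \<Rightarrow> bool) \<Rightarrow> real" where
  "cantor_of_digits d = (\<Sum>n. (if d n then 2 else 0) / 3 ^ Suc n)"

lemma sums_two_div_three_powers: "(\<lambda>n. 2 / (3::real) ^ Suc (n + k)) sums (1 / 3 ^ k)"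
proof -
  have "(\<lambda>n. 2 / 3 ^ Suc k * (1/3::real) ^ n) sums (2 / 3 ^ Suc k * (1 / (1 - 1/3)))"
    by (intro sums_mult geometric_sums) auto
  then show ?thesis
    by (simp add: power_add field_simps)
qed

lemma summable_cantor_digits: "summable (\<lambda>n. (if d n then 2 else 0) / (3::real) ^ Suc n)"
proof (rule summable_comparison_test)
  show "summable (\<lambda>n. 2 / (3::real) ^ Suc n)"
    using sums_summable[OF sums_two_div_three_powers[of 0]] by simp
qed auto

text \<open>The first differing digit outweighs all later ones: \<open>2/3^(k+1) > \<Sum>n>k. 2/3^(n+1) = 1/3^(k+1)\<close>.\<close>
lemma cantor_of_digits_less:
  assumes "\<And>n. n < k \<Longrightarrow> d n = d' n" "d k" "\<not> d' k"
  shows "cantor_of_digits d' < cantor_of_digits d"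
proof -
  define c where "c n = (if d n then 2 else 0) / (3::real) ^ Suc n - (if d' n then 2 else 0) / 3 ^ Suc n" for n
  have c: "summable c"
    unfolding c_def by (intro summable_diff summable_cantor_digits)
  have tail: "summable (\<lambda>n. 2 / (3::real) ^ Suc (n + Suc k))" "(\<Sum>n. 2 / (3::real) ^ Suc (n + Suc k)) = 1 / 3 ^ Suc k"
    using sums_two_div_three_powers[of "Suc k"] by (auto simp: sums_iff)
  have "(\<Sum>n. - (2 / (3::real) ^ Suc (n + Suc k))) \<le> (\<Sum>n. c (n + Suc k))"
    by (rule suminf_le[OF _ summable_minus[OF tail(1)] summable_ignore_initial_segment[OF c]])
      (auto simp: c_def)
  then have lower: "- (1 / 3 ^ Suc k) \<le> (\<Sum>n. c (n + Suc k))"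
    using suminf_minus[OF tail(1)] tail(2) by simp
  have "cantor_of_digits d - cantor_of_digits d' = (\<Sum>n. c n)"
    unfolding cantor_of_digits_def c_def
    using suminf_diff[OF summable_cantor_digits summable_cantor_digits] by simp
  also have "\<dots> = (\<Sum>n. c (n + Suc k)) + (\<Sum>i<Suc k. c i)"
    by (rule suminf_split_initial_segment[OF c])
  also have "(\<Sum>i<Suc k. c i) = 2 / 3 ^ Suc k"
    using assms by (auto simp: c_def intro!: sum.neutral)
  finally have "cantor_of_digits d - cantor_of_digits d' = (\<Sum>n. c (n + Suc k)) + 2 / 3 ^ Suc k" .
  moreover have "2 / 3 ^ Suc k = 2 * (1 / (3::real) ^ Suc k)" "0 < 1 / (3::real) ^ Suc k"
    by simp_all
  ultimately show ?thesis
    using lower by linarith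
qed

lemma inj_cantor_of_digits: "inj cantor_of_digits"
proof
  fix d d' assume eq: "cantor_of_digits d = cantor_of_digits d'"
  show "d = d'"
  proof (rule ccontr)
    assume "d \<noteq> d'"
    then obtain m where "d m \<noteq> d' m"
      by auto
    define k where "k = (LEAST m. d m \<noteq> d' m)"
    have "d k \<noteq> d' k" "\<And>n. n < k \<Longrightarrow> d n = d' n"
      using LeastI[of "\<lambda>m. d m \<noteq> d' m", OF \<open>d m \<noteq> d' m\<close>] not_less_Least
      unfolding k_def by blast+
    then show False
      using cantor_of_digits_less[of k d d'] cantor_of_digits_less[of k d' d] eq by (cases "d k") auto
  qed
qed

definition binary_digits :: "real \<Rightarrow> nat \<Rightarrow> bool" where
  "binary_digits x n = odd \<lfloor>2 ^ Suc n * x\<rfloor>"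

lemma floor_double: "\<lfloor>2 * y\<rfloor> = 2 * \<lfloor>y\<rfloor> + (if odd \<lfloor>2 * y\<rfloor> then 1 else 0)" for y :: real
proof -
  have "2 * \<lfloor>y\<rfloor> \<le> \<lfloor>2 * y\<rfloor>" "\<lfloor>2 * y\<rfloor> \<le> 2 * \<lfloor>y\<rfloor> + 1"
    by (simp_all add: le_floor_iff floor_le_iff) linarith+
  then have "\<lfloor>2 * y\<rfloor> = 2 * \<lfloor>y\<rfloor> \<or> \<lfloor>2 * y\<rfloor> = 2 * \<lfloor>y\<rfloor> + 1"
    by linarith
  then show ?thesis
    by auto
qed

lemma binary_digits_determine_floor:
  assumes "x \<in> {0..<1}" "y \<in> {0..<1}" "binary_digits x = binary_digits y"
  shows "\<lfloor>2 ^ n * x\<rfloor> = \<lfloor>2 ^ n * y\<rfloor>"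
proof (induction n)
  case 0
  have "\<lfloor>x\<rfloor> = 0" "\<lfloor>y\<rfloor> = 0"
    using assms(1,2) by (simp_all add: floor_eq_iff)
  then show ?case
    by simp
next
  case (Suc n)
  then show ?case
    using floor_double[of "2 ^ n * x"] floor_double[of "2 ^ n * y"] fun_cong[OF assms(3), of n]
    by (simp add: binary_digits_def mult.assoc)
qed

lemma inj_on_binary_digits: "inj_on binary_digits {0..<1}"
proof
  fix x y :: real assume xy: "x \<in> {0..<1}" "y \<in> {0..<1}" "binary_digits x = binary_digits y"
  have small: "\<bar>x - y\<bar> < (1/2) ^ n" for n
  proof -
    have "\<lfloor>2 ^ n * x\<rfloor> = \<lfloor>2 ^ n * y\<rfloor>"
      using binary_digits_determine_floor[OF xy] .
    then have "\<bar>2 ^ n * x - 2 ^ n * y\<bar> < 1"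
      by linarith
    then have "2 ^ n * \<bar>x - y\<bar> < 1"
      by (simp add: abs_mult flip: right_diff_distrib)
    then show ?thesis
      by (simp add: field_simps)
  qed
  show "x = y"
  proof (rule ccontr)
    assume "x \<noteq> y"
    then obtain n where "(1/2) ^ n < \<bar>x - y\<bar>"
      using real_arch_pow_inv[of "\<bar>x - y\<bar>" "1/2"] by auto
    with small[of n] show False
      by simp
  qed
qed

definition cantor_of_real :: "real \<Rightarrow> real" where
  "cantor_of_real x = cantor_of_digits (binary_digits x)"

lemma inj_on_cantor_of_real: "inj_on cantor_of_real {0..<1}"
  using inj_on_binary_digits inj_cantor_of_digits
  by (auto simp: inj_on_def cantor_of_real_def)

lemma cantor_of_real_in_cantor_set: "cantor_of_real x \<in> cantor_set"
  by (simp add: cantor_of_real_def cantor_of_digits_def cantor_set_def)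

lemma cantor_of_real_measurable: "cantor_of_real \<in> measurable borel (restrict_space borel cantor_set)"
proof (rule measurable_restrict_space2)
  show "cantor_of_real \<in> borel_measurable borel"
    unfolding cantor_of_real_def cantor_of_digits_def binary_digits_def by measurable
qed (simp add: cantor_of_real_in_cantor_set)

lemma cantor_set_parametrization:
  fixes C :: "'a::topological_space set"
  assumes "C homeomorphic cantor_set"
  obtains c :: "real \<Rightarrow> 'a" where "c \<in> measurable borel (restrict_space borel C)" "inj_on c {0..<1}"
proof -
  obtain f g where "homeomorphism C cantor_set f g"
    using assms homeomorphic_def by blast
  then have g: "continuous_on cantor_set g" "g ` cantor_set \<subseteq> C" "inj_on g cantor_set"
    unfolding homeomorphism_def by (auto intro: inj_on_inverseI)
  show ?thesis
  proof
    show "g \<circ> cantor_of_real \<in> measurable borel (restrict_space borel C)"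
      using measurable_comp[OF cantor_of_real_measurable measurable_restrict_space_continuous_on[OF g(1,2)]] .
    show "inj_on (g \<circ> cantor_of_real) {0..<1}"
      using cantor_of_real_in_cantor_set
      by (intro comp_inj_on inj_on_cantor_of_real inj_on_subset[OF g(3)]) blast
  qed
qed

section \<open>Diffuse image measures and weak-* convergence to a Dirac mass\<close>

lemma AE_uniform_unit_interval_inj_on_neq:
  assumes "inj_on \<psi> {0..<1::real}"
  shows "AE x in uniform_measure lborel {0..<1}. \<psi> x \<noteq> q"
proof (rule AE_uniform_measureI)
  let ?N = "{x\<in>{0..<1}. \<psi> x = q}"
  have "inj_on \<psi> ?N"
    by (rule inj_on_subset[OF assms]) blast
  moreover have "finite (\<psi> ` ?N)"
    by (rule finite_subset[of _ "{q}"]) blast+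
  ultimately have "finite ?N"
    by (metis finite_imageD)
  then show "AE x in lborel. x \<in> {0..<1} \<longrightarrow> \<psi> x \<noteq> q"
    by (rule AE_I'[OF finite_imp_null_set_lborel]) blast
qed simp

lemma measurable_uniform_measure_lborel:
  "\<psi> \<in> measurable borel N \<Longrightarrow> \<psi> \<in> measurable (uniform_measure lborel A) N"
  using measurable_cong_sets[of "uniform_measure lborel A" borel N N] by simp

lemma
  fixes \<psi> :: "real \<Rightarrow> 'a::t1_space"
  assumes \<psi>: "\<psi> \<in> measurable borel (restrict_space borel S)"
  defines "\<eta> \<equiv> distr (uniform_measure lborel {0..<1}) (restrict_space borel S) \<psi>"
  shows borel_prob_on_distr_uniform: "borel_prob_on S \<eta>"
    and diffuse_distr_uniform: "inj_on \<psi> {0..<1} \<Longrightarrow> diffuse \<eta>"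
proof -
  let ?U = "uniform_measure lborel {0..<1::real}"
  interpret U: prob_space ?U
    by (rule prob_space_uniform_measure) auto
  have \<psi>U: "\<psi> \<in> measurable ?U (restrict_space borel S)"
    by (rule measurable_uniform_measure_lborel[OF \<psi>])
  show "borel_prob_on S \<eta>"
    using U.prob_space_distr[OF \<psi>U] by (simp add: borel_prob_on_def \<eta>_def space_restrict_space)
  show "diffuse \<eta>" if "inj_on \<psi> {0..<1}"
    unfolding diffuse_def
  proof
    fix p assume "p \<in> space \<eta>"
    then have p: "{p} \<in> sets (restrict_space borel S)"
      by (auto simp: \<eta>_def space_restrict_space sets_restrict_space intro!: image_eqI[where x="{p}"] borel_closed)
    have N: "\<psi> -` {p} \<inter> space ?U \<in> sets ?U"
      by (rule measurable_sets[OF \<psi>U p])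
    have eq: "{x \<in> space ?U. \<not> \<psi> x \<noteq> p} = \<psi> -` {p} \<inter> space ?U"
      by auto
    have null: "emeasure ?U (\<psi> -` {p} \<inter> space ?U) = 0"
      using iffD1[OF AE_iff_measurable[OF N eq] AE_uniform_unit_interval_inj_on_neq[OF that]] .
    show "emeasure \<eta> {p} = 0"
      by (simp only: \<eta>_def emeasure_distr[OF \<psi>U p] null)
  qed
qed

lemma tendsto_integral_AE_tendsto:
  fixes f :: "'a::topological_space \<Rightarrow> real"
  assumes "prob_space M" "compact S" "continuous_on S f" "p \<in> S"
    and \<phi>: "\<And>n. \<phi> n \<in> measurable M (restrict_space borel S)"
    and lim: "AE x in M. (\<lambda>n. \<phi> n x) \<longlonglongrightarrow> p"
  shows "(\<lambda>n. \<integral>x. f (\<phi> n x) \<partial>M) \<longlonglongrightarrow> f p"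
proof -
  interpret prob_space M by fact
  obtain B where B: "\<And>y. y \<in> S \<Longrightarrow> norm (f y) \<le> B"
    using compact_imp_bounded[OF compact_continuous_image[OF assms(3,2)]] by (auto simp: bounded_iff)
  have in_S: "\<phi> n x \<in> S" if "x \<in> space M" for n x
    using measurable_space[OF \<phi> that] by (simp add: space_restrict_space)
  have "(\<lambda>n. \<integral>x. f (\<phi> n x) \<partial>M) \<longlonglongrightarrow> (\<integral>x. f p \<partial>M)"
  proof (rule integral_dominated_convergence[where w="\<lambda>_. B"])
    show "(\<lambda>x. f (\<phi> n x)) \<in> borel_measurable M" for n
      using measurable_compose[OF \<phi> borel_measurable_continuous_on_restrict[OF assms(3)]] .
    show "AE x in M. (\<lambda>n. f (\<phi> n x)) \<longlonglongrightarrow> f p"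
      using lim AE_space
    proof eventually_elim
      case (elim x)
      then show ?case
        using in_S by (intro continuous_on_tendsto_compose[OF assms(3) _ assms(4)] always_eventually) auto
    qed
    show "AE x in M. norm (f (\<phi> n x)) \<le> B" for n
      using B in_S by simp
  qed simp_all
  then show ?thesis
    using prob_space.prob_space[OF assms(1)] by simp
qed

lemma weak_star_diff_to_zero_distr_AE_tendsto:
  assumes "prob_space M" "compact S" "p \<in> S"
    and \<phi>: "\<And>n. \<phi> n \<in> measurable M (restrict_space borel S)" "\<And>n. \<phi>' n \<in> measurable M (restrict_space borel S)"
    and "AE x in M. (\<lambda>n. \<phi> n x) \<longlonglongrightarrow> p" "AE x in M. (\<lambda>n. \<phi>' n x) \<longlonglongrightarrow> p"
  shows "weak_star_diff_to_zero S (\<lambda>n. distr M (restrict_space borel S) (\<phi> n))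
           (\<lambda>n. distr M (restrict_space borel S) (\<phi>' n))"
  unfolding weak_star_diff_to_zero_def
proof (intro allI impI)
  fix f :: "_ \<Rightarrow> real" assume f: "continuous_on S f"
  have "(\<lambda>n. (\<integral>x. f (\<phi> n x) \<partial>M) - (\<integral>x. f (\<phi>' n x) \<partial>M)) \<longlonglongrightarrow> f p - f p"
    using assms f by (intro tendsto_diff tendsto_integral_AE_tendsto) auto
  moreover have "integral\<^sup>L (distr M (restrict_space borel S) (\<phi> n)) f = (\<integral>x. f (\<phi> n x) \<partial>M)"
    "integral\<^sup>L (distr M (restrict_space borel S) (\<phi>' n)) f = (\<integral>x. f (\<phi>' n x) \<partial>M)" for n
    using \<phi> borel_measurable_continuous_on_restrict[OF f] by (simp_all add: integral_distr)
  ultimately show "(\<lambda>n. integral\<^sup>L (distr M (restrict_space borel S) (\<phi> n)) f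
      - integral\<^sup>L (distr M (restrict_space borel S) (\<phi>' n)) f) \<longlonglongrightarrow> 0"
    by simp
qed

lemma push_distr:
  assumes "compact_G_space G K act" "g \<in> carrier G" "\<psi> \<in> measurable M (restrict_space borel K)"
  shows "push act g (distr M (restrict_space borel K) \<psi>) = distr M (restrict_space borel K) (\<lambda>x. act g (\<psi> x))"
proof -
  have "act g \<in> measurable (restrict_space borel K) (distr M (restrict_space borel K) \<psi>)"
    using compact_G_space_measurable[OF assms(1,2)] by simp
  then show ?thesis
    unfolding push_def by (subst distr_distr[OF _ assms(3)]) (auto simp: comp_def intro!: distr_cong)
qed

lemma weak_star_diff_to_zero_push_push:
  fixes K :: "'a::metric_space set" and \<psi> :: "real \<Rightarrow> 'a"
  assumes act: "compact_G_space G K act" and "Kstar \<subseteq> K"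
    and invariant: "\<forall>g\<in>carrier G. act g ` Kstar \<subseteq> Kstar"
    and \<psi>: "\<psi> \<in> measurable borel (restrict_space borel Kstar)" "inj_on \<psi> {0..<1}"
    and gs: "\<And>n. gs n \<in> carrier G" and "p \<in> K"
    and lim: "\<forall>\<xi>\<in>Kstar - {q}. (\<lambda>n. act (gs n) \<xi>) \<longlonglongrightarrow> p"
    and h: "h \<in> carrier G"
  defines "\<eta> \<equiv> distr (uniform_measure lborel {0..<1}) (restrict_space borel K) \<psi>"
  shows "weak_star_diff_to_zero K (\<lambda>n. push act (gs n) (push act h \<eta>)) (\<lambda>n. push act (gs n) \<eta>)"
proof -
  let ?U = "uniform_measure lborel {0..<1::real}"
  interpret group_action G K act
    using act by (simp add: compact_G_space_def)
  have range_\<psi>: "range \<psi> \<subseteq> Kstar"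
    using \<psi>(1) by (auto simp: measurable_restrict_space2_iff)
  have \<psi>U: "\<psi> \<in> measurable ?U (restrict_space borel K)"
    using \<psi>(1) range_\<psi> \<open>Kstar \<subseteq> K\<close>
    by (intro measurable_uniform_measure_lborel) (auto simp: measurable_restrict_space2_iff)
  have h\<psi>: "(\<lambda>x. act h (\<psi> x)) \<in> measurable ?U (restrict_space borel K)"
    using measurable_compose[OF \<psi>U compact_G_space_measurable[OF act h]] .
  have g\<phi>: "(\<lambda>x. act (gs n) (\<phi> x)) \<in> measurable ?U (restrict_space borel K)"
    if "\<phi> \<in> measurable ?U (restrict_space borel K)" for \<phi> n
    using measurable_compose[OF that compact_G_space_measurable[OF act gs]] .
  have AE_lim: "AE x in ?U. (\<lambda>n. act (gs n) (\<phi> x)) \<longlonglongrightarrow> p"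
    if "inj_on \<phi> {0..<1}" "range \<phi> \<subseteq> Kstar" for \<phi>
    using AE_uniform_unit_interval_inj_on_neq[OF that(1), of q]
    by eventually_elim (use that(2) lim in blast)
  have "inj_on (act h \<circ> \<psi>) {0..<1}"
    using range_\<psi> \<open>Kstar \<subseteq> K\<close> by (intro comp_inj_on \<psi>(2) inj_on_subset[OF inj_prop[OF h]]) blast
  moreover have "range (act h \<circ> \<psi>) \<subseteq> Kstar"
    using range_\<psi> invariant h by auto
  moreover have "prob_space ?U"
    by (rule prob_space_uniform_measure) simp_all
  moreover have "compact K"
    using act by (simp add: compact_G_space_def)
  ultimately have "weak_star_diff_to_zero K
      (\<lambda>n. distr ?U (restrict_space borel K) (\<lambda>x. act (gs n) (act h (\<psi> x))))
      (\<lambda>n. distr ?U (restrict_space borel K) (\<lambda>x. act (gs n) (\<psi> x)))"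
    using AE_lim[of "act h \<circ> \<psi>"] AE_lim[OF \<psi>(2) range_\<psi>] \<open>p \<in> K\<close>
    by (intro weak_star_diff_to_zero_distr_AE_tendsto g\<phi> h\<psi> \<psi>U) simp_all
  moreover have "push act (gs n) (push act h \<eta>) = distr ?U (restrict_space borel K) (\<lambda>x. act (gs n) (act h (\<psi> x)))"
    "push act (gs n) \<eta> = distr ?U (restrict_space borel K) (\<lambda>x. act (gs n) (\<psi> x))" for n
    unfolding \<eta>_def using push_distr[OF act h \<psi>U] push_distr[OF act gs] \<psi>U h\<psi> by simp_all
  ultimately show ?thesis
    by simp
qed

lemma properly_proximalI:
  fixes K :: "(nat \<Rightarrow> real) set" and \<psi> :: "real \<Rightarrow> nat \<Rightarrow> real"
  assumes act: "compact_G_space G K act" "\<not> has_invariant_prob G K act"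
    and Kstar: "Kstar \<subseteq> K" "\<forall>g\<in>carrier G. act g ` Kstar \<subseteq> Kstar"
    and \<psi>: "\<psi> \<in> measurable borel (restrict_space borel Kstar)" "inj_on \<psi> {0..<1}"
    and contracting: "\<And>gs. \<forall>n. gs n \<in> carrier G \<Longrightarrow> escapes actX gs \<Longrightarrow>
      \<exists>\<sigma> q p. strict_mono \<sigma> \<and> p \<in> K \<and> (\<forall>\<xi>\<in>Kstar - {q}. (\<lambda>n. act (gs (\<sigma> n)) \<xi>) \<longlonglongrightarrow> p)"
  shows "properly_proximal G actX"
proof -
  define \<eta> where "\<eta> = distr (uniform_measure lborel {0..<1}) (restrict_space borel K) \<psi>"
  have \<psi>K: "\<psi> \<in> measurable borel (restrict_space borel K)"
    using \<psi>(1) Kstar(1) by (auto simp: measurable_restrict_space2_iff)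
  have \<eta>: "borel_prob_on K \<eta>" "diffuse \<eta>"
    unfolding \<eta>_def by (rule borel_prob_on_distr_uniform[OF \<psi>K], rule diffuse_distr_uniform[OF \<psi>K \<psi>(2)])
  have "\<exists>\<sigma>. strict_mono \<sigma> \<and> (\<forall>h\<in>carrier G. weak_star_diff_to_zero K
      (\<lambda>n. push act (gs (\<sigma> n)) (push act h \<eta>)) (\<lambda>n. push act (gs (\<sigma> n)) \<eta>))"
    if gs: "\<forall>n. gs n \<in> carrier G" "escapes actX gs" for gs
  proof -
    obtain \<sigma> q p where "strict_mono \<sigma>" "p \<in> K" "\<forall>\<xi>\<in>Kstar - {q}. (\<lambda>n. act (gs (\<sigma> n)) \<xi>) \<longlonglongrightarrow> p"
      using contracting[OF gs] by blast
    with gs(1) show ?thesis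
      unfolding \<eta>_def by (intro exI[of _ \<sigma>] conjI ballI weak_star_diff_to_zero_push_push[OF act(1) Kstar \<psi>]) auto
  qed
  with act \<eta> show ?thesis
    unfolding properly_proximal_def
    by (intro exI[of _ 1] exI[of _ "\<lambda>_. K"] exI[of _ "\<lambda>_. act"] exI[of _ "\<lambda>_. \<eta>"]) auto
qed

lemma properly_proximal_metricI:
  fixes K :: "'k::metric_space set" and \<psi> :: "real \<Rightarrow> 'k"
  assumes act: "compact_G_space G K act" "\<not> has_invariant_prob G K act"
    and Kstar: "Kstar \<subseteq> K" "\<forall>g\<in>carrier G. act g ` Kstar \<subseteq> Kstar"
    and \<psi>: "\<psi> \<in> measurable borel (restrict_space borel Kstar)" "inj_on \<psi> {0..<1}"
    and contracting: "\<And>gs. \<forall>n. gs n \<in> carrier G \<Longrightarrow> escapes actX gs \<Longrightarrow>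
      \<exists>\<sigma> q p. strict_mono \<sigma> \<and> p \<in> K \<and> (\<forall>\<xi>\<in>Kstar - {q}. (\<lambda>n. act (gs (\<sigma> n)) \<xi>) \<longlonglongrightarrow> p)"
  shows "properly_proximal G actX"
proof -
  interpret group_action G K act
    using act(1) by (simp add: compact_G_space_def)
  obtain e :: "'k \<Rightarrow> nat \<Rightarrow> real" and e' where hom: "homeomorphism K (e ` K) e e'"
    using compact_homeomorphic_image_in_sequences act(1) by (metis compact_G_space_def)
  then have e: "continuous_on K e" "inj_on e K"
    unfolding homeomorphism_def by (auto intro: inj_on_inverseI)
  let ?act = "conjugate_action e e' (e ` K) act"
  have act_e: "?act g (e x) = e (act g x)" if "x \<in> K" for g x
    using conjugate_action_apply[OF hom that] .
  have range_\<psi>: "range \<psi> \<subseteq> Kstar"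
    using \<psi>(1) by (auto simp: measurable_restrict_space2_iff)
  show ?thesis
  proof (rule properly_proximalI[where Kstar="e ` Kstar" and \<psi>="e \<circ> \<psi>"])
    show "compact_G_space G (e ` K) ?act"
      by (rule compact_G_space_conjugate[OF act(1) hom])
    show "\<not> has_invariant_prob G (e ` K) ?act"
      by (rule not_has_invariant_prob_conjugate[OF act(1) hom act(2)])
    show "e ` Kstar \<subseteq> e ` K"
      using Kstar(1) by blast
    show "\<forall>g\<in>carrier G. ?act g ` e ` Kstar \<subseteq> e ` Kstar"
      using Kstar act_e by (auto simp: image_subset_iff)
    show "e \<circ> \<psi> \<in> measurable borel (restrict_space borel (e ` Kstar))"
      using measurable_comp[OF \<psi>(1) measurable_restrict_space_continuous_on[OF continuous_on_subset[OF e(1) Kstar(1)] subset_refl]] .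
    show "inj_on (e \<circ> \<psi>) {0..<1}"
      using range_\<psi> Kstar(1) by (intro comp_inj_on \<psi>(2) inj_on_subset[OF e(2)]) blast
  next
    fix gs assume "\<forall>n. gs n \<in> carrier G" "escapes actX gs"
    then obtain \<sigma> q p where \<sigma>: "strict_mono \<sigma>" "p \<in> K" and gs: "\<And>n. gs (\<sigma> n) \<in> carrier G"
      and lim: "\<forall>\<xi>\<in>Kstar - {q}. (\<lambda>n. act (gs (\<sigma> n)) \<xi>) \<longlonglongrightarrow> p"
      using contracting by blast
    have "(\<lambda>n. ?act (gs (\<sigma> n)) (e \<xi>)) \<longlonglongrightarrow> e p" if "\<xi> \<in> Kstar" "\<xi> \<noteq> q" for \<xi>
    proof -
      have "\<xi> \<in> K"
        using that Kstar(1) by blast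
      then have "(\<lambda>n. e (act (gs (\<sigma> n)) \<xi>)) \<longlonglongrightarrow> e p"
        using that lim gs element_image
        by (intro continuous_on_tendsto_compose[OF e(1) _ \<sigma>(2)] always_eventually) blast+
      with \<open>\<xi> \<in> K\<close> show ?thesis
        by (simp add: act_e)
    qed
    with \<sigma> show "\<exists>\<sigma> q p. strict_mono \<sigma> \<and> p \<in> e ` K \<and>
        (\<forall>\<xi>\<in>e ` Kstar - {q}. (\<lambda>n. ?act (gs (\<sigma> n)) \<xi>) \<longlonglongrightarrow> p)"
      by (intro exI[of _ \<sigma>] exI[of _ "e q"] exI[of _ "e p"]) auto
  qed
qed

theorem lemma1p6:
  fixes G :: "('g, 'b) monoid_scheme"
    and actX :: "'g \<Rightarrow> 'x::metric_space \<Rightarrow> 'x"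
    and K :: "'k::metric_space set"
    and actK :: "'g \<Rightarrow> 'k \<Rightarrow> 'k"
    and Kstar :: "'k set"
  assumes "group G"
    and "countable (carrier G)"
    and "proper_metric_space TYPE('x)"
    and "isometric_action G actX"
    and "compact_G_space G K actK"
    and "\<not> has_invariant_prob G K actK"
    and "Kstar \<subseteq> K" and "Kstar \<in> sets borel"
    and "\<forall>g\<in>carrier G. actK g ` Kstar \<subseteq> Kstar"
    and "\<exists>C. C \<subseteq> Kstar \<and> C \<in> sets borel \<and> C homeomorphic cantor_set"
    and "\<forall>gs. (\<forall>n. gs n \<in> carrier G) \<longrightarrow> escapes actX gs \<longrightarrow>
           (\<exists>\<sigma> \<xi>m \<xi>p. strict_mono \<sigma> \<and> \<xi>m \<in> K \<and> \<xi>p \<in> K \<and>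
              (\<forall>\<xi>\<in>Kstar - {\<xi>m}. (\<lambda>n. actK (gs (\<sigma> n)) \<xi>) \<longlonglongrightarrow> \<xi>p))"
  shows "properly_proximal G actX"
proof -
  obtain C where C: "C \<subseteq> Kstar" "C homeomorphic cantor_set"
    using assms(10) by blast
  then obtain c :: "real \<Rightarrow> 'k" where c: "c \<in> measurable borel (restrict_space borel C)" "inj_on c {0..<1}"
    using cantor_set_parametrization by blast
  then have "c \<in> measurable borel (restrict_space borel Kstar)"
    using C(1) by (auto simp: measurable_restrict_space2_iff)
  from properly_proximal_metricI[OF assms(5,6,7,9) this c(2)] assms(11)
  show ?thesis
    by blast
qed

end
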